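(* Let $A \in \mathbb{R}^{m \times r}$, $B \in \mathbb{R}^{r \times n}$, and $S \subseteq \mathbb{R}^n$. The following are equivalent: (i) $\ker(A_\kappa B_\lambda) \cap S = \emptyset$ for all $\kappa \in \mathbb{R}^r_+$ and $\lambda\in \mathbb{R}^n_+$; (ii) $\sigma(\ker(A)) \cap \sigma(B(\Sigma(S))) = \emptyset$.
   Context: $\mathbb{R}_+$ denotes the strictly positive reals. $A_\kappa = A\,\mathrm{diag}(\kappa)$, $B_\lambda = B\,\mathrm{diag}(\lambda)$. For $x\in\mathbb{R}^n$, $\sigma(x)\in\{-,0,+\}^n$ is the componentwise sign vector; for $T\subseteq\mathbb{R}^n$, $\sigma(T)=\{\sigma(x)\mid x\in T\}$ and $\Sigma(T)=\sigma^{-1}(\sigma(T))=\{\lambda\circ x\mid \lambda\in\mathbb{R}^n_+, x\in T\}$, where $\circ$ is the componentwise product. $B(T)=\{Bx\mid x\in T\}$. *)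

theory Defs
  imports "HOL-Analysis.Analysis"
begin

definition diag_mat :: "real ^ 'n \<Rightarrow> real ^ 'n ^ 'n" where
  "diag_mat v = (\<chi> i j. if i = j then v $ i else 0)"

definition ker_mat :: "real ^ 'c ^ 'r \<Rightarrow> (real ^ 'c) set" where
  "ker_mat M = {x. M *v x = 0}"

definition pos_orthant :: "(real ^ 'n) set" where
  "pos_orthant = {v. \<forall>i. v $ i > 0}"

text \<open>Componentwise sign vector, entries in {-1,0,1} encoding {-,0,+}.\<close>
definition sign_vec :: "real ^ 'n \<Rightarrow> real ^ 'n" where
  "sign_vec x = (\<chi> i. sgn (x $ i))"

definition Sigma_set :: "(real ^ 'n) set \<Rightarrow> (real ^ 'n) set" where
  "Sigma_set T = {(\<chi> i. l $ i * x $ i) | l x. l \<in> pos_orthant \<and> x \<in> T}"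

end

theory Submission
  imports Defs
begin

(* Two vectors have the same sign pattern exactly when one is a positive rescaling of the
   other. Hence sigma(ker A) meets sigma(B(Sigma(S))) iff kappa o B(lambda o x) lies in ker A for
   some positive kappa, lambda and x in S, i.e. iff x lies in ker(A_kappa B_lambda). *)

lemma diag_mat_mult_vector: "diag_mat v *v x = (\<chi> i. v $ i * x $ i)"
proof -
  have "(\<Sum>j\<in>UNIV. (if i = j then v $ i else 0) * x $ j) = v $ i * x $ i" for i :: 'a
    by (simp add: if_distrib[of "\<lambda>t. t * _"] cong: if_cong)
  thus ?thesis by (simp add: vec_eq_iff matrix_vector_mult_def diag_mat_def)
qed

lemma Sigma_set_eq: "Sigma_set T = {diag_mat l *v x | l x. l \<in> pos_orthant \<and> x \<in> T}"
  by (simp add: Sigma_set_def diag_mat_mult_vector)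

lemma sign_vec_eq_iff_pos_rescaling:
  "sign_vec z = sign_vec y \<longleftrightarrow> (\<exists>k \<in> pos_orthant. z = diag_mat k *v y)"
proof
  assume "sign_vec z = sign_vec y"
  hence sgn_eq: "sgn (z $ i) = sgn (y $ i)" for i
    unfolding sign_vec_def by (metis vec_lambda_beta)
  define k where "k = (\<chi> i. if y $ i = 0 then 1 else z $ i / y $ i)"
  have "k $ i > 0" for i
    using sgn_eq[of i] by (cases "y $ i > 0"; cases "z $ i > 0")
      (auto simp: k_def sgn_if divide_neg_neg split: if_splits)
  moreover have "k $ i * y $ i = z $ i" for i
    using sgn_eq[of i] by (auto simp: k_def sgn_if split: if_splits)
  ultimately show "\<exists>k \<in> pos_orthant. z = diag_mat k *v y"
    by (intro bexI[of _ k]) (auto simp: pos_orthant_def diag_mat_mult_vector vec_eq_iff)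
next
  assume "\<exists>k \<in> pos_orthant. z = diag_mat k *v y"
  then show "sign_vec z = sign_vec y"
    by (auto simp: pos_orthant_def sign_vec_def diag_mat_mult_vector sgn_mult vec_eq_iff)
qed

lemma ker_mat_scaled_product_iff:
  "x \<in> ker_mat ((A ** diag_mat k) ** (B ** diag_mat l))
     \<longleftrightarrow> diag_mat k *v (B *v (diag_mat l *v x)) \<in> ker_mat A"
  by (simp add: ker_mat_def matrix_vector_mul_assoc[symmetric] matrix_mul_assoc)

theorem mainTheorem4:
  fixes A :: "real ^ 'r ^ 'm" and B :: "real ^ 'n ^ 'r" and S :: "(real ^ 'n) set"
  shows "(\<forall>\<kappa> \<in> pos_orthant. \<forall>l \<in> pos_orthant.
            ker_mat ((A ** diag_mat \<kappa>) ** (B ** diag_mat l)) \<inter> S = {})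
     \<longleftrightarrow> (sign_vec ` ker_mat A) \<inter> (sign_vec ` ((\<lambda>x. B *v x) ` Sigma_set S)) = {}"
proof -
  have "(sign_vec ` ker_mat A) \<inter> (sign_vec ` ((\<lambda>x. B *v x) ` Sigma_set S)) \<noteq> {}
      \<longleftrightarrow> (\<exists>z \<in> ker_mat A. \<exists>l \<in> pos_orthant. \<exists>x \<in> S.
            sign_vec z = sign_vec (B *v (diag_mat l *v x)))"
    unfolding Sigma_set_eq by blast
  also have "\<dots> \<longleftrightarrow> (\<exists>\<kappa> \<in> pos_orthant. \<exists>l \<in> pos_orthant. \<exists>x \<in> S.
            diag_mat \<kappa> *v (B *v (diag_mat l *v x)) \<in> ker_mat A)"
    unfolding sign_vec_eq_iff_pos_rescaling by blast
  also have "\<dots> \<longleftrightarrow> \<not> (\<forall>\<kappa> \<in> pos_orthant. \<forall>l \<in> pos_orthant.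
            ker_mat ((A ** diag_mat \<kappa>) ** (B ** diag_mat l)) \<inter> S = {})"
    using ker_mat_scaled_product_iff by blast
  finally show ?thesis by blast
qed

end
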